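(* Let $\bm\mu=(\mu_1,\dots,\mu_r)$ be finite positive Borel measures on the unit circle with infinite supports and let $\bm n,\bm m\in\mathbb N^r$. The following are equivalent: (a) $(\bm n,\bm m)$ is normal, i.e. there is a unique $\Phi\in\operatorname{span}\{z^p\}_{p=-|\bm m|}^{|\bm n|}$ with coefficient of $z^{|\bm n|}$ equal to $1$ satisfying $\int\Phi(w)w^{-p}\,d\mu_j(w)=0$ for $p=-m_j,\dots,n_j-1$, $j=1,\dots,r$; (b) there is no nonzero $\Phi\in\operatorname{span}\{z^p\}_{p=-|\bm m|}^{|\bm n|-1}$ satisfying the orthogonality relations in (a); (c) there is a unique $\Phi^*\in\operatorname{span}\{z^p\}_{p=-|\bm m|}^{|\bm n|}$ with coefficient of $z^{-|\bm m|}$ equal to $1$ satisfying $\int\Phi^*(w)w^{-p}\,d\mu_j(w)=0$ for $p=-m_j+1,\dots,n_j$, $j=1,\dots,r$; (d) there is no nonzero $\Phi^*\in\operatorname{span}\{z^p\}_{p=-|\bm m|+1}^{|\bm n|}$ satisfying the orthogonality relations in (c).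
   Context: $|\bm n|=n_1+\dots+n_r$ for $\bm n=(n_1,\dots,n_r)$ with non-negative integer entries; $\operatorname{span}\{z^p\}_{p=a}^b$ denotes the span of the monomials $z^a,z^{a+1},\dots,z^b$ (integer exponents). *)

theory Defs
  imports "HOL-Analysis.Analysis"
begin

definition msupport :: "complex measure \<Rightarrow> complex set" where
  "msupport M = {x. \<forall>e>0. emeasure M (ball x e) > 0}"

definition circle_measure :: "complex measure \<Rightarrow> bool" where
  "circle_measure M \<longleftrightarrow> sets M = sets borel \<and> finite_measure M \<and>
     emeasure M (- sphere 0 1) = 0"

text \<open>A Laurent polynomial in span{z^p}, p = a..b, is represented by its
  coefficient function c, vanishing outside {a..b}.\<close>
definition in_span :: "(int \<Rightarrow> complex) \<Rightarrow> int \<Rightarrow> int \<Rightarrow> bool" where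
  "in_span c a b \<longleftrightarrow> (\<forall>p. p < a \<or> b < p \<longrightarrow> c p = 0)"

definition laurent :: "(int \<Rightarrow> complex) \<Rightarrow> int \<Rightarrow> int \<Rightarrow> complex \<Rightarrow> complex" where
  "laurent c a b w = (\<Sum>p = a..b. c p * w powi p)"

definition mnorm :: "nat \<Rightarrow> (nat \<Rightarrow> nat) \<Rightarrow> nat" where
  "mnorm r n = (\<Sum>j<r. n j)"

end

theory Submission
  imports Defs
begin

text \<open>Each family of orthogonality conditions is a homogeneous linear system for the
  coefficients, whose matrix consists of the moments \<open>\<integral> w powi (q - p) d\<mu>\<^sub>j\<close>
  (on the unit circle \<open>w powi q * w powi (-p) = w powi (q - p)\<close>). In (a) and (c) there
  are fewer conditions than coefficients, so a nontrivial solution exists; it can be normalized,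
  and the normalized solution is then unique, exactly when the square system left after dropping
  the normalized coefficient has only the trivial solution. These square systems are (b) and (d),
  and since the moment matrix depends only on \<open>q - p\<close>, multiplication by \<open>z\<close> carries the
  solutions of (b) bijectively onto those of (d).\<close>

definition solves_homogeneous ::
    "('e \<Rightarrow> 'i \<Rightarrow> 'a::semiring_0) \<Rightarrow> 'e set \<Rightarrow> 'i set \<Rightarrow> ('i \<Rightarrow> 'a) \<Rightarrow> bool" where
  "solves_homogeneous H E S c \<longleftrightarrow> (\<forall>e\<in>E. (\<Sum>q\<in>S. c q * H e q) = 0)"

lemma support_diff_subset:
  fixes c d :: "'i \<Rightarrow> 'a::group_add"
  assumes "{q. c q \<noteq> 0} \<subseteq> T" "{q. d q \<noteq> 0} \<subseteq> T"
  shows "{q. c q - d q \<noteq> 0} \<subseteq> T"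
proof -
  have "{q. c q - d q \<noteq> 0} \<subseteq> {q. c q \<noteq> 0} \<union> {q. d q \<noteq> 0}" by auto
  with assms show ?thesis by blast
qed

lemma solves_homogeneous_diff:
  fixes H :: "'e \<Rightarrow> 'i \<Rightarrow> 'a::ring"
  assumes "solves_homogeneous H E S c" "solves_homogeneous H E S d"
  shows "solves_homogeneous H E S (\<lambda>q. c q - d q)"
  using assms by (simp add: solves_homogeneous_def left_diff_distrib sum_subtractf)

lemma solves_homogeneous_scale:
  assumes "solves_homogeneous H E S c"
  shows "solves_homogeneous H E S (\<lambda>q. a * c q)"
  using assms by (simp add: solves_homogeneous_def mult.assoc flip: sum_distrib_left)

lemma solves_homogeneous_eliminate:
  fixes H :: "'e \<Rightarrow> 'i \<Rightarrow> 'a::field"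
  assumes "finite S" "q0 \<in> S" "H e q0 \<noteq> 0"
    and "solves_homogeneous (\<lambda>x q. H x q - H x q0 / H e q0 * H e q) E (S - {q0}) c"
  shows "solves_homogeneous H (insert e E) S (c(q0 := - (\<Sum>q\<in>S - {q0}. c q * H e q) / H e q0))"
proof -
  let ?v = "- (\<Sum>q\<in>S - {q0}. c q * H e q) / H e q0"
  have split: "(\<Sum>q\<in>S. (c(q0 := ?v)) q * H x q) = ?v * H x q0 + (\<Sum>q\<in>S - {q0}. c q * H x q)" for x
    using assms(1,2) by (simp add: sum.remove[of S q0])
  have "(\<Sum>q\<in>S - {q0}. c q * H x q) = H x q0 / H e q0 * (\<Sum>q\<in>S - {q0}. c q * H e q)" if "x \<in> E" for x
    using assms(4) that
    by (simp add: solves_homogeneous_def algebra_simps sum_subtractf sum_distrib_left)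
  then show ?thesis
    unfolding solves_homogeneous_def split using assms(3) by auto
qed

lemma underdetermined_homogeneous_nontrivial_solution:
  fixes H :: "'e \<Rightarrow> 'i \<Rightarrow> 'a::field"
  assumes "finite E" "finite S" "card E < card S"
  shows "\<exists>c. {q. c q \<noteq> 0} \<subseteq> S \<and> c \<noteq> (\<lambda>_. 0) \<and> solves_homogeneous H E S c"
  using assms
proof (induction E arbitrary: S H rule: finite_induct)
  case empty
  then obtain q0 where "q0 \<in> S" by fastforce
  then show ?case
    by (intro exI[of _ "\<lambda>q. if q = q0 then 1 else 0"]) (auto simp: solves_homogeneous_def fun_eq_iff)
next
  case (insert e E)
  show ?case
  proof (cases "\<forall>q\<in>S. H e q = 0")
    case True
    obtain c where "{q. c q \<noteq> 0} \<subseteq> S" "c \<noteq> (\<lambda>_. 0)" "solves_homogeneous H E S c"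
      using insert.IH[of S H] insert.prems insert.hyps by auto
    with True show ?thesis by (auto simp: solves_homogeneous_def)
  next
    case False
    then obtain q0 where q0: "q0 \<in> S" "H e q0 \<noteq> 0" by auto
    have "card E < card (S - {q0})" using insert q0 by simp
    then obtain c where c: "{q. c q \<noteq> 0} \<subseteq> S - {q0}" "c \<noteq> (\<lambda>_. 0)"
        "solves_homogeneous (\<lambda>x q. H x q - H x q0 / H e q0 * H e q) E (S - {q0}) c"
      using insert.IH insert.prems by blast
    let ?c = "c(q0 := - (\<Sum>q\<in>S - {q0}. c q * H e q) / H e q0)"
    have "{q. ?c q \<noteq> 0} \<subseteq> S" "?c \<noteq> (\<lambda>_. 0)"
      using c(1,2) q0(1) by (auto simp: fun_eq_iff)
    then show ?thesis
      using solves_homogeneous_eliminate[OF insert.prems(1) q0 c(3)] by blast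
  qed
qed

lemma support_insert_solves_homogeneous_iff:
  assumes "finite S" "q0 \<notin> S" "c q0 = 0"
  shows "{q. c q \<noteq> 0} \<subseteq> insert q0 S \<and> solves_homogeneous H E (insert q0 S) c
     \<longleftrightarrow> {q. c q \<noteq> 0} \<subseteq> S \<and> solves_homogeneous H E S c"
proof -
  have "{q. c q \<noteq> 0} \<subseteq> insert q0 S \<longleftrightarrow> {q. c q \<noteq> 0} \<subseteq> S" using assms(3) by auto
  then show ?thesis using assms by (simp add: solves_homogeneous_def)
qed

lemma unique_normalized_solution_imp_trivial_kernel:
  fixes H :: "'e \<Rightarrow> 'i \<Rightarrow> 'a::ring_1"
  assumes "finite S" "q0 \<notin> S"
    and "\<exists>!c. {q. c q \<noteq> 0} \<subseteq> insert q0 S \<and> c q0 = 1 \<and> solves_homogeneous H E (insert q0 S) c"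
      (is "\<exists>!c. ?normal c")
  shows "\<not> (\<exists>d. {q. d q \<noteq> 0} \<subseteq> S \<and> d \<noteq> (\<lambda>_. 0) \<and> solves_homogeneous H E S d)"
proof
  assume "\<exists>d. {q. d q \<noteq> 0} \<subseteq> S \<and> d \<noteq> (\<lambda>_. 0) \<and> solves_homogeneous H E S d"
  then obtain d where d: "{q. d q \<noteq> 0} \<subseteq> S" "d \<noteq> (\<lambda>_. 0)" "solves_homogeneous H E S d"
    by blast
  obtain c where c: "?normal c" and unique: "\<And>c'. ?normal c' \<Longrightarrow> c' = c"
    using assms(3) by (elim ex1E) blast
  have "d q0 = 0" using d(1) assms(2) by auto
  then have "{q. d q \<noteq> 0} \<subseteq> insert q0 S" "solves_homogeneous H E (insert q0 S) d"
    using support_insert_solves_homogeneous_iff[where c = d and H = H and E = E, OF assms(1,2)] d(1,3)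
    by blast+
  then have "?normal (\<lambda>q. c q - d q)"
    using c \<open>d q0 = 0\<close> support_diff_subset[of c "insert q0 S" d]
    by (simp add: solves_homogeneous_diff)
  then have "(\<lambda>q. c q - d q) = c" by (rule unique)
  with d(2) show False by (simp add: fun_eq_iff)
qed

lemma normalized_solutions_diff_in_kernel:
  fixes H :: "'e \<Rightarrow> 'i \<Rightarrow> 'a::ring_1"
  assumes "finite S" "q0 \<notin> S"
    and "{q. c1 q \<noteq> 0} \<subseteq> insert q0 S" "c1 q0 = 1" "solves_homogeneous H E (insert q0 S) c1"
    and "{q. c2 q \<noteq> 0} \<subseteq> insert q0 S" "c2 q0 = 1" "solves_homogeneous H E (insert q0 S) c2"
  shows "{q. c1 q - c2 q \<noteq> 0} \<subseteq> S \<and> solves_homogeneous H E S (\<lambda>q. c1 q - c2 q)"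
proof -
  have "{q. c1 q - c2 q \<noteq> 0} \<subseteq> insert q0 S"
    using assms by (intro support_diff_subset) auto
  moreover have "solves_homogeneous H E (insert q0 S) (\<lambda>q. c1 q - c2 q)"
    using assms by (simp add: solves_homogeneous_diff)
  moreover have "c1 q0 - c2 q0 = 0" using assms by simp
  ultimately show ?thesis
    using support_insert_solves_homogeneous_iff[where c = "\<lambda>q. c1 q - c2 q" and H = H and E = E,
        OF assms(1,2)] by simp
qed

lemma trivial_kernel_imp_unique_normalized_solution:
  fixes H :: "'e \<Rightarrow> 'i \<Rightarrow> 'a::field"
  assumes "finite E" "finite S" "q0 \<notin> S" "card E \<le> card S"
    and trivial: "\<not> (\<exists>d. {q. d q \<noteq> 0} \<subseteq> S \<and> d \<noteq> (\<lambda>_. 0) \<and> solves_homogeneous H E S d)"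
  shows "\<exists>!c. {q. c q \<noteq> 0} \<subseteq> insert q0 S \<and> c q0 = 1 \<and> solves_homogeneous H E (insert q0 S) c"
    (is "\<exists>!c. ?normal c")
proof -
  have "finite (insert q0 S)" "card E < card (insert q0 S)" using assms by simp_all
  then obtain c where c: "{q. c q \<noteq> 0} \<subseteq> insert q0 S" "c \<noteq> (\<lambda>_. 0)"
      "solves_homogeneous H E (insert q0 S) c"
    using underdetermined_homogeneous_nontrivial_solution[OF assms(1)] by blast
  have "c q0 \<noteq> 0"
  proof
    assume "c q0 = 0"
    then have "{q. c q \<noteq> 0} \<subseteq> S" "solves_homogeneous H E S c"
      using support_insert_solves_homogeneous_iff[where c = c and H = H and E = E, OF assms(2,3)] c
      by simp_all
    with c(2) trivial show False by blast
  qed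
  have normalized: "?normal (\<lambda>q. inverse (c q0) * c q)"
  proof (intro conjI)
    have "{q. inverse (c q0) * c q \<noteq> 0} = {q. c q \<noteq> 0}" using \<open>c q0 \<noteq> 0\<close> by simp
    then show "{q. inverse (c q0) * c q \<noteq> 0} \<subseteq> insert q0 S" using c(1) by (simp only:)
    show "inverse (c q0) * c q0 = 1" using \<open>c q0 \<noteq> 0\<close> by simp
    show "solves_homogeneous H E (insert q0 S) (\<lambda>q. inverse (c q0) * c q)"
      using c(3) by (rule solves_homogeneous_scale)
  qed
  have unique: "c1 = c2" if "?normal c1" "?normal c2" for c1 c2
  proof -
    define d where "d = (\<lambda>q. c1 q - c2 q)"
    have "{q. d q \<noteq> 0} \<subseteq> S" "solves_homogeneous H E S d"
      unfolding d_def using normalized_solutions_diff_in_kernel[OF assms(2,3)] that by blast+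
    with trivial have "d = (\<lambda>_. 0)" by blast
    then show ?thesis by (simp add: d_def fun_eq_iff)
  qed
  show ?thesis
  proof (rule ex1I[of ?normal "\<lambda>q. inverse (c q0) * c q"])
    fix c' assume "?normal c'"
    then show "c' = (\<lambda>q. inverse (c q0) * c q)" using normalized by (rule unique)
  qed (rule normalized)
qed

lemma unique_normalized_solution_iff_trivial_kernel:
  fixes H :: "'e \<Rightarrow> 'i \<Rightarrow> 'a::field"
  assumes "finite E" "finite S" "q0 \<notin> S" "card E = card S"
  shows "(\<exists>!c. {q. c q \<noteq> 0} \<subseteq> insert q0 S \<and> c q0 = 1 \<and> solves_homogeneous H E (insert q0 S) c)
     \<longleftrightarrow> \<not> (\<exists>d. {q. d q \<noteq> 0} \<subseteq> S \<and> d \<noteq> (\<lambda>_. 0) \<and> solves_homogeneous H E S d)"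
    (is "?normal \<longleftrightarrow> \<not> ?kernel")
proof
  assume ?normal
  then show "\<not> ?kernel" by (rule unique_normalized_solution_imp_trivial_kernel[OF assms(2,3)])
next
  assume "\<not> ?kernel"
  with assms show ?normal by (intro trivial_kernel_imp_unique_normalized_solution) simp_all
qed

lemma solves_homogeneous_shift_iff:
  fixes H :: "'j \<times> int \<Rightarrow> int \<Rightarrow> 'a::semiring_0"
  assumes shift: "\<And>j p q. H (j, p + 1) (q + 1) = H (j, p) q"
  shows "solves_homogeneous H (Sigma J (\<lambda>j. {lo j..hi j - 1})) {a..b - 1} (\<lambda>q. c (q + 1))
     \<longleftrightarrow> solves_homogeneous H (Sigma J (\<lambda>j. {lo j + 1..hi j})) {a + 1..b} c"
proof -
  have sum_shift: "(\<Sum>q\<in>{a..b - 1}. c (q + 1) * H (j, p) q) = (\<Sum>q\<in>{a + 1..b}. c q * H (j, p + 1) q)"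
    for j p
    by (rule sum.reindex_bij_witness[of _ "\<lambda>q. q - 1" "\<lambda>q. q + 1"]) (auto simp: shift)
  show ?thesis
    unfolding solves_homogeneous_def
  proof safe
    fix j p assume "\<forall>e\<in>Sigma J (\<lambda>j. {lo j + 1..hi j}). (\<Sum>q\<in>{a + 1..b}. c q * H e q) = 0"
      and "j \<in> J" "p \<in> {lo j..hi j - 1}"
    then have "(\<Sum>q\<in>{a + 1..b}. c q * H (j, p + 1) q) = 0" by auto
    then show "(\<Sum>q\<in>{a..b - 1}. c (q + 1) * H (j, p) q) = 0" by (simp only: sum_shift)
  next
    fix j p' assume "\<forall>e\<in>Sigma J (\<lambda>j. {lo j..hi j - 1}). (\<Sum>q\<in>{a..b - 1}. c (q + 1) * H e q) = 0"
      and "j \<in> J" "p' \<in> {lo j + 1..hi j}"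
    then show "(\<Sum>q\<in>{a + 1..b}. c q * H (j, p') q) = 0"
      using sum_shift[of j "p' - 1"] by auto
  qed
qed

lemma shift_invariant_nontrivial_solution_iff:
  fixes H :: "'j \<times> int \<Rightarrow> int \<Rightarrow> 'a::semiring_0"
  assumes shift: "\<And>j p q. H (j, p + 1) (q + 1) = H (j, p) q"
  shows "(\<exists>c. {q. c q \<noteq> 0} \<subseteq> {a..b - 1} \<and> c \<noteq> (\<lambda>_. 0) \<and>
            solves_homogeneous H (Sigma J (\<lambda>j. {lo j..hi j - 1})) {a..b - 1} c)
     \<longleftrightarrow> (\<exists>c. {q. c q \<noteq> 0} \<subseteq> {a + 1..b} \<and> c \<noteq> (\<lambda>_. 0) \<and>
            solves_homogeneous H (Sigma J (\<lambda>j. {lo j + 1..hi j})) {a + 1..b} c)"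
proof -
  have ex_shift: "(\<exists>c. P c) \<longleftrightarrow> (\<exists>c. P (\<lambda>q. c (q + 1)))" for P :: "(int \<Rightarrow> 'a) \<Rightarrow> bool"
  proof
    assume "\<exists>c. P c"
    then obtain c where "P c" ..
    then show "\<exists>c. P (\<lambda>q. c (q + 1))" by (intro exI[where x = "\<lambda>q. c (q - 1)"]) simp
  qed blast
  have support: "{q. c (q + 1) \<noteq> 0} \<subseteq> {a..b - 1} \<longleftrightarrow> {q. c q \<noteq> 0} \<subseteq> {a + 1..b}"
    for c :: "int \<Rightarrow> 'a"
  proof
    assume shifted: "{q. c (q + 1) \<noteq> 0} \<subseteq> {a..b - 1}"
    show "{q. c q \<noteq> 0} \<subseteq> {a + 1..b}"
    proof
      fix q assume "q \<in> {q. c q \<noteq> 0}"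
      then have "q - 1 \<in> {q. c (q + 1) \<noteq> 0}" by simp
      then have "q - 1 \<in> {a..b - 1}" using shifted ..
      then show "q \<in> {a + 1..b}" by auto
    qed
  qed auto
  have nonzero: "(\<lambda>q. c (q + 1)) \<noteq> (\<lambda>_. 0) \<longleftrightarrow> c \<noteq> (\<lambda>_. 0)" for c :: "int \<Rightarrow> 'a"
    by (metis diff_add_cancel)
  show ?thesis
    by (subst ex_shift) (simp only: support nonzero solves_homogeneous_shift_iff[where H = H, OF shift])
qed

lemma borel_measurable_power_int [measurable]: "(\<lambda>w::complex. w powi k) \<in> borel_measurable borel"
  unfolding power_int_def by (cases "k \<ge> 0") auto

lemma circle_measure_AE_norm_eq_1:
  assumes "circle_measure M"
  shows "AE w in M. norm w = 1"
proof -
  have "emeasure M (- sphere 0 1) = 0" "- sphere 0 1 \<in> sets M"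
    using assms by (auto simp: circle_measure_def)
  then have "AE w in M. w \<notin> - sphere 0 1" by (intro AE_I[where N = "- sphere 0 1"]) auto
  then show ?thesis by (simp add: dist_norm)
qed

lemma integrable_power_int_circle:
  assumes "circle_measure M"
  shows "integrable M (\<lambda>w::complex. w powi k)"
proof -
  interpret finite_measure M using assms by (simp add: circle_measure_def)
  have [measurable_cong]: "sets M = sets borel" using assms by (simp add: circle_measure_def)
  show ?thesis
  proof (rule integrable_const_bound[where B = 1])
    show "AE w in M. norm (w powi k) \<le> 1"
      using circle_measure_AE_norm_eq_1[OF assms] by eventually_elim (simp add: norm_power_int)
  qed measurable
qed

definition moment :: "complex measure \<Rightarrow> int \<Rightarrow> complex" where
  "moment M k = (\<integral>w. w powi k \<partial>M)"

lemma integral_laurent_mult_power_int: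
  assumes "circle_measure M"
  shows "(\<integral>w. laurent c a b w * w powi (-p) \<partial>M) = (\<Sum>q=a..b. c q * moment M (q - p))"
proof -
  have [measurable_cong]: "sets M = sets borel" using assms by (simp add: circle_measure_def)
  have "AE w in M. laurent c a b w * w powi (-p) = (\<Sum>q=a..b. c q * w powi (q - p))"
    using circle_measure_AE_norm_eq_1[OF assms]
  proof eventually_elim
    case (elim w)
    then have "w \<noteq> 0" by auto
    then show ?case
      by (simp add: laurent_def sum_distrib_right mult.assoc power_int_diff power_int_minus
          divide_inverse)
  qed
  then have "(\<integral>w. laurent c a b w * w powi (-p) \<partial>M) = (\<integral>w. (\<Sum>q=a..b. c q * w powi (q - p)) \<partial>M)"
    by (rule integral_cong_AE[rotated 2]) (measurable, simp add: laurent_def, measurable)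
  also have "\<dots> = (\<Sum>q=a..b. c q * moment M (q - p))"
    using integrable_power_int_circle[OF assms] by (simp add: moment_def)
  finally show ?thesis .
qed

definition moment_matrix :: "(nat \<Rightarrow> complex measure) \<Rightarrow> nat \<times> int \<Rightarrow> int \<Rightarrow> complex" where
  "moment_matrix \<mu> e q = moment (\<mu> (fst e)) (q - snd e)"

lemma moment_matrix_shift: "moment_matrix \<mu> (j, p + 1) (q + 1) = moment_matrix \<mu> (j, p) q"
  by (simp add: moment_matrix_def)

lemma orthogonality_iff_solves_moment_matrix:
  assumes "\<And>j. j < r \<Longrightarrow> circle_measure (\<mu> j)"
  shows "(\<forall>j<r. \<forall>p\<in>P j. (\<integral>w. laurent c a b w * w powi (-p) \<partial>(\<mu> j)) = 0)
    \<longleftrightarrow> solves_homogeneous (moment_matrix \<mu>) (Sigma {..<r} P) {a..b} c"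
  using assms
  by (auto simp: solves_homogeneous_def moment_matrix_def integral_laurent_mult_power_int)

lemma in_span_iff_support: "in_span c a b \<longleftrightarrow> {q. c q \<noteq> 0} \<subseteq> {a..b}"
  unfolding in_span_def subset_eq by (meson atLeastAtMost_iff mem_Collect_eq not_le)

theorem proposition2p8:
  fixes r :: nat and \<mu> :: "nat \<Rightarrow> complex measure" and n m :: "nat \<Rightarrow> nat"
  assumes meas: "\<And>j. j < r \<Longrightarrow> circle_measure (\<mu> j)"
      and inf_supp: "\<And>j. j < r \<Longrightarrow> infinite (msupport (\<mu> j))"
  defines "N \<equiv> int (mnorm r n)" and "M \<equiv> int (mnorm r m)"
  shows
   "((\<exists>!c. in_span c (-M) N \<and> c N = 1 \<and>
        (\<forall>j<r. \<forall>p\<in>{-int (m j)..int (n j) - 1}.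
           (\<integral>w. laurent c (-M) N w * w powi (-p) \<partial>(\<mu> j)) = 0))
     \<longleftrightarrow>
     \<not> (\<exists>c. in_span c (-M) (N - 1) \<and> c \<noteq> (\<lambda>_. 0) \<and>
        (\<forall>j<r. \<forall>p\<in>{-int (m j)..int (n j) - 1}.
           (\<integral>w. laurent c (-M) (N - 1) w * w powi (-p) \<partial>(\<mu> j)) = 0)))
  \<and> ((\<exists>!c. in_span c (-M) N \<and> c N = 1 \<and>
        (\<forall>j<r. \<forall>p\<in>{-int (m j)..int (n j) - 1}.
           (\<integral>w. laurent c (-M) N w * w powi (-p) \<partial>(\<mu> j)) = 0))
     \<longleftrightarrow>
     (\<exists>!c. in_span c (-M) N \<and> c (-M) = 1 \<and>
        (\<forall>j<r. \<forall>p\<in>{-int (m j) + 1..int (n j)}.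
           (\<integral>w. laurent c (-M) N w * w powi (-p) \<partial>(\<mu> j)) = 0)))
  \<and> ((\<exists>!c. in_span c (-M) N \<and> c N = 1 \<and>
        (\<forall>j<r. \<forall>p\<in>{-int (m j)..int (n j) - 1}.
           (\<integral>w. laurent c (-M) N w * w powi (-p) \<partial>(\<mu> j)) = 0))
     \<longleftrightarrow>
     \<not> (\<exists>c. in_span c (-M + 1) N \<and> c \<noteq> (\<lambda>_. 0) \<and>
        (\<forall>j<r. \<forall>p\<in>{-int (m j) + 1..int (n j)}.
           (\<integral>w. laurent c (-M + 1) N w * w powi (-p) \<partial>(\<mu> j)) = 0)))"
proof -
  let ?H = "moment_matrix \<mu>"
  let ?E = "Sigma {..<r} (\<lambda>j. {-int (m j)..int (n j) - 1})"
  let ?E' = "Sigma {..<r} (\<lambda>j. {-int (m j) + 1..int (n j)})"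
  have "N \<ge> 0" "M \<ge> 0" by (simp_all add: N_def M_def)
  then have top: "insert N {-M..N - 1} = {-M..N}" and bottom: "insert (-M) {-M + 1..N} = {-M..N}"
    by auto
  have fin: "finite ?E" "finite ?E'" by auto
  have card: "card ?E = card {-M..N - 1}" "card ?E' = card {-M + 1..N}"
    by (simp_all add: card_SigmaI N_def M_def mnorm_def sum.distrib flip: of_nat_add of_nat_sum)
  have "N \<notin> {-M..N - 1}" "-M \<notin> {-M + 1..N}" by auto
  note normal_iff = unique_normalized_solution_iff_trivial_kernel[where H = ?H]
  show ?thesis
    unfolding in_span_iff_support
    using normal_iff[OF fin(1) finite_atLeastAtMost_int \<open>N \<notin> _\<close> card(1), unfolded top]
      normal_iff[OF fin(2) finite_atLeastAtMost_int \<open>-M \<notin> _\<close> card(2), unfolded bottom]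
      shift_invariant_nontrivial_solution_iff[where H = ?H and a = "-M" and b = N and J = "{..<r}"
        and lo = "\<lambda>j. -int (m j)" and hi = "\<lambda>j. int (n j)", OF moment_matrix_shift]
    by (simp only: orthogonality_iff_solves_moment_matrix[OF meas])
qed

end
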